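(* Let $\delta\in(0,1)$, let $\varepsilon\in\{\pm1\}^n$ have independent Rademacher entries, and let $e_j$ be the $j$-th canonical basis vector of $\mathbb{R}^n$. Then $$\mathbb{P}\Big\{\max_{j=1,\dots,n}\|e_j^\top W\,\mathrm{diag}(\varepsilon)\,U\bar D\|_2\geqslant\sqrt{\tfrac{d_e}{n}}+\sqrt{\tfrac{8\log(n/\delta)}{n}}\Big\}\leqslant\delta .$$
   Context: Let $A\in\mathbb{R}^{n\times d}$, $A\neq0$, with $n\geqslant d$ and $n$ a power of $2$, $\Lambda\in\mathbb{R}^{d\times d}$ diagonal with $\Lambda\succeq I_d$, $\nu>0$. Let $A(A^\top A+\nu^2\Lambda)^{-1/2}=UDV^\top$ be a thin SVD ($U\in\mathbb{R}^{n\times d}$ with orthonormal columns, $D$ diagonal nonnegative), $\bar D=D/\|D\|_2$, and $d_e=\|D\|_F^2/\|D\|_2^2$. $W\in\mathbb{R}^{n\times n}$ is the normalized (orthonormal) Walsh–Hadamard matrix, whose entries all have magnitude $n^{-1/2}$. *)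

theory Defs
  imports "Jordan_Normal_Form.Matrix" "HOL-Probability.Probability_Mass_Function"
begin

definition vnorm :: "real Matrix.vec \<Rightarrow> real" where
  "vnorm v = sqrt (v \<bullet> v)"

definition op_norm :: "real Matrix.mat \<Rightarrow> real" where
  "op_norm M = Sup {vnorm (M *\<^sub>v x) | x. x \<in> carrier_vec (dim_col M) \<and> vnorm x \<le> 1}"

definition frob_norm :: "real Matrix.mat \<Rightarrow> real" where
  "frob_norm M = sqrt (\<Sum>i<dim_row M. \<Sum>j<dim_col M. (M $$ (i,j))^2)"

definition psd_mat :: "nat \<Rightarrow> real Matrix.mat \<Rightarrow> bool" where
  "psd_mat k M \<longleftrightarrow> M \<in> carrier_mat k k \<and> transpose_mat M = M \<and>
     (\<forall>x \<in> carrier_vec k. x \<bullet> (M *\<^sub>v x) \<ge> 0)"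

(* M^{-1/2}: the (unique) positive semidefinite square root of the inverse of
   a positive definite k x k matrix M *)
definition inv_sqrt_mat :: "nat \<Rightarrow> real Matrix.mat \<Rightarrow> real Matrix.mat" where
  "inv_sqrt_mat k M = (THE S. psd_mat k S \<and> S * S * M = 1\<^sub>m k)"

(* normalized Walsh--Hadamard (Sylvester) matrix of size n = 2^k:
   W_{ij} = 2^{-k/2} (-1)^{<bits i, bits j>} *)
definition walsh_hadamard :: "nat \<Rightarrow> real Matrix.mat" where
  "walsh_hadamard k = Matrix.mat (2^k) (2^k)
     (\<lambda>(i,j). (-1) ^ card {b. b < k \<and> bit i b \<and> bit j b} / sqrt (2^k))"

(* Rademacher vectors in {-1,1}^n (entries outside 0..<n are fixed to the default) *)
definition rademacher_set :: "nat \<Rightarrow> (nat \<Rightarrow> real) set" where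
  "rademacher_set n = PiE {0..<n} (\<lambda>_. {-1, 1})"

end

theory Submission
  imports Defs
begin

text \<open>
  For a fixed row j, the map eps |-> ||e_j^T W diag(eps) U Dbar|| is the Euclidean norm of the
  Rademacher sum sum_i eps_i a_i with a_i = W_ji (U Dbar)_i. Since |W_ji|^2 = 1/n and U has
  orthonormal columns, its mean is at most (sum_i ||a_i||^2)^(1/2) = (d_e/n)^(1/2). Being a norm,
  it drops by at most 2 |<a_i, u>| when eps_i is flipped, u the unit vector in the direction of the
  sum, so the squared one-sided drops add up to at most 4 sup_{||u|| = 1} sum_i <a_i, u>^2 <= 4/n,
  because ||Dbar|| <= 1. A modified logarithmic Sobolev inequality on the cube (the two-point
  variational formula for the entropy, tensorised) and Herbst's argument turn this into
  log E exp(lambda (f - E f)) <= 2 lambda^2 / n, hence P(f >= E f + t) <= exp(-n t^2/8) = delta/n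
  for the t of the theorem. A union bound over the n rows concludes.
\<close>

section \<open>The Rademacher cube\<close>

lemma finite_rademacher_set: "finite (rademacher_set n)"
  unfolding rademacher_set_def by (simp add: finite_PiE)

lemma card_rademacher_set: "card (rademacher_set n) = 2 ^ n"
  unfolding rademacher_set_def by (simp add: card_PiE eval_nat_numeral)

lemma rademacher_set_not_empty: "rademacher_set n \<noteq> {}"
  using card_rademacher_set[of n] by auto

lemma rademacher_set_0: "rademacher_set 0 = {\<lambda>_. undefined}"
  unfolding rademacher_set_def by simp

lemma rademacher_coord: "x \<in> rademacher_set n \<Longrightarrow> i < n \<Longrightarrow> x i = 1 \<or> x i = -1"
  unfolding rademacher_set_def by (auto simp: PiE_iff)

lemma fun_upd_in_rademacher_set:
  "x \<in> rademacher_set n \<Longrightarrow> i < n \<Longrightarrow> s \<in> {-1, 1} \<Longrightarrow> x(i := s) \<in> rademacher_set n"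
  unfolding rademacher_set_def by (auto simp: PiE_iff extensional_def)

lemma sum_rademacher_set_Suc:
  "(\<Sum>y\<in>rademacher_set (Suc n). \<phi> y) =
   (\<Sum>x\<in>rademacher_set n. \<phi> (x(n := 1)) + \<phi> (x(n := -1)))"
proof -
  let ?ext = "\<lambda>(s, x). x(n := s)"
  have image: "rademacher_set (Suc n) = ?ext ` ({-1, 1} \<times> rademacher_set n)"
    unfolding rademacher_set_def by (simp add: atLeast0_lessThan_Suc PiE_insert_eq)
  have inj: "inj_on ?ext ({-1, 1} \<times> rademacher_set n)"
    unfolding rademacher_set_def using inj_combinator[of n "{0..<n}" "\<lambda>_. {-1, 1::real}"] by simp
  have "(\<Sum>y\<in>rademacher_set (Suc n). \<phi> y) = (\<Sum>(s, x)\<in>{-1, 1} \<times> rademacher_set n. \<phi> (x(n := s)))"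
    unfolding image sum.reindex[OF inj] by (simp add: case_prod_beta comp_def)
  also have "\<dots> = (\<Sum>x\<in>rademacher_set n. \<phi> (x(n := -1))) + (\<Sum>x\<in>rademacher_set n. \<phi> (x(n := 1)))"
    by (simp add: sum.cartesian_product[symmetric])
  finally show ?thesis by (simp add: sum.distrib add.commute)
qed

definition flip_coord :: "nat \<Rightarrow> (nat \<Rightarrow> real) \<Rightarrow> nat \<Rightarrow> real" where
  "flip_coord i x = x(i := - x i)"

lemma sum_rademacher_set_flip_coord:
  assumes "i < n"
  shows "(\<Sum>x\<in>rademacher_set n. \<phi> (flip_coord i x)) = (\<Sum>x\<in>rademacher_set n. \<phi> x)"
proof -
  have "flip_coord i x \<in> rademacher_set n" if "x \<in> rademacher_set n" for x
    using rademacher_coord[OF that assms] fun_upd_in_rademacher_set[OF that assms]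
    by (auto simp: flip_coord_def)
  then have "bij_betw (flip_coord i) (rademacher_set n) (rademacher_set n)"
    by (intro bij_betw_byWitness[where f' = "flip_coord i"]) (auto simp: flip_coord_def)
  then show ?thesis by (simp add: sum.reindex_bij_betw)
qed

lemma sum_rademacher_set_mult_coords:
  assumes "i < n" "l < n"
  shows "(\<Sum>x\<in>rademacher_set n. x i * x l) = (if i = l then 2 ^ n else 0)"
proof (cases "i = l")
  case True
  have "x i * x l = 1" if "x \<in> rademacher_set n" for x
    using rademacher_coord[OF that assms(2)] True by auto
  then show ?thesis using True by (simp add: card_rademacher_set)
next
  case False
  have "(\<Sum>x\<in>rademacher_set n. x i * x l) = (\<Sum>x\<in>rademacher_set n. flip_coord i x i * flip_coord i x l)"
    by (rule sum_rademacher_set_flip_coord[OF assms(1), symmetric])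
  also have "\<dots> = - (\<Sum>x\<in>rademacher_set n. x i * x l)"
    using False by (simp add: flip_coord_def sum_negf[symmetric])
  finally show ?thesis using False by simp
qed

section \<open>Entropy on the cube\<close>

definition bregman_xlnx :: "real \<Rightarrow> real \<Rightarrow> real" where
  "bregman_xlnx h u = h * ln h - h * ln u - h + u"

definition two_point_entropy :: "real \<Rightarrow> real \<Rightarrow> real" where
  "two_point_entropy a b = a * ln a + b * ln b - (a + b) * ln ((a + b) / 2)"

text \<open>2^n times the entropy of h under the uniform distribution on the cube.\<close>

definition cube_entropy :: "nat \<Rightarrow> ((nat \<Rightarrow> real) \<Rightarrow> real) \<Rightarrow> real" where
  "cube_entropy n h = (\<Sum>x\<in>rademacher_set n. h x * ln (h x))
     - (\<Sum>x\<in>rademacher_set n. h x) * ln ((\<Sum>x\<in>rademacher_set n. h x) / 2 ^ n)"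

lemma bregman_xlnx_eq: "h > 0 \<Longrightarrow> u > 0 \<Longrightarrow> bregman_xlnx h u = h * ln (h / u) - h + u"
  by (simp add: bregman_xlnx_def ln_div algebra_simps)

lemma bregman_xlnx_nonneg:
  assumes "h > 0" "u > 0"
  shows "0 \<le> bregman_xlnx h u"
proof -
  have "h * ln (u / h) \<le> h * (u / h - 1)"
    using assms ln_le_minus_one[of "u / h"] by (intro mult_left_mono) auto
  then show ?thesis
    using assms by (simp add: bregman_xlnx_def ln_div algebra_simps)
qed

lemma log_sum_inequality:
  fixes a b c e :: real
  assumes "a > 0" "b > 0" "c > 0" "e > 0"
  shows "(a + b) * ln ((a + b) / (c + e)) \<le> a * ln (a / c) + b * ln (b / e)"
proof -
  define S T where "S = a + b" and "T = c + e"
  have ST: "S > 0" "T > 0" using assms by (auto simp: S_def T_def)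
  have "bregman_xlnx a (c * S / T) = a * ln (a / c) - a * ln (S / T) - a + c * S / T"
    using assms ST by (simp add: bregman_xlnx_eq ln_div ln_mult algebra_simps)
  moreover have "bregman_xlnx b (e * S / T) = b * ln (b / e) - b * ln (S / T) - b + e * S / T"
    using assms ST by (simp add: bregman_xlnx_eq ln_div ln_mult algebra_simps)
  moreover have "c * S / T + e * S / T = S"
    using ST by (simp add: T_def add_divide_distrib[symmetric] distrib_right[symmetric])
  moreover have "0 \<le> bregman_xlnx a (c * S / T) + bregman_xlnx b (e * S / T)"
    using assms ST by (intro add_nonneg_nonneg bregman_xlnx_nonneg) auto
  ultimately show ?thesis
    unfolding S_def[symmetric] T_def[symmetric] by (simp add: S_def distrib_right)
qed

lemma bregman_xlnx_midpoint_convex: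
  fixes a b c e :: real
  assumes "a > 0" "b > 0" "c > 0" "e > 0"
  shows "2 * bregman_xlnx ((a + b) / 2) ((c + e) / 2) \<le> bregman_xlnx a c + bregman_xlnx b e"
proof -
  have "((a + b) / 2) / ((c + e) / 2) = (a + b) / (c + e)"
    using assms by (simp add: field_simps)
  moreover have "(a + b) / 2 > 0" "(c + e) / 2 > 0" using assms by simp_all
  ultimately have "2 * bregman_xlnx ((a + b) / 2) ((c + e) / 2)
      = 2 * ((a + b) / 2 * ln ((a + b) / (c + e)) - (a + b) / 2 + (c + e) / 2)"
    by (simp add: bregman_xlnx_eq)
  also have "\<dots> = (a + b) * ln ((a + b) / (c + e)) - (a + b) + (c + e)"
    by (simp add: field_simps)
  also have "\<dots> \<le> a * ln (a / c) + b * ln (b / e) - (a + b) + (c + e)"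
    using log_sum_inequality[OF assms] by simp
  also have "\<dots> = bregman_xlnx a c + bregman_xlnx b e"
    using assms by (simp add: bregman_xlnx_eq)
  finally show ?thesis .
qed

lemma two_point_entropy_add_bregman:
  "two_point_entropy a b + 2 * bregman_xlnx ((a + b) / 2) w = bregman_xlnx a w + bregman_xlnx b w"
proof -
  define m where "m = (a + b) / 2"
  have "2 * bregman_xlnx m w = (a + b) * ln m - (a + b) * ln w - (a + b) + 2 * w"
    by (simp add: bregman_xlnx_def m_def field_simps)
  then show ?thesis
    by (simp add: two_point_entropy_def bregman_xlnx_def m_def[symmetric] algebra_simps)
qed

lemma two_point_entropy_le_bregman:
  fixes a b w :: real
  assumes "a > 0" "b > 0" "w > 0"
  shows "two_point_entropy a b \<le> bregman_xlnx a w + bregman_xlnx b w"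
  using two_point_entropy_add_bregman[of a b w] bregman_xlnx_nonneg[of "(a + b) / 2" w] assms by simp

lemma cube_entropy_Suc:
  "cube_entropy (Suc n) h =
     (\<Sum>x\<in>rademacher_set n. two_point_entropy (h (x(n := 1))) (h (x(n := -1))))
     + 2 * cube_entropy n (\<lambda>x. (h (x(n := 1)) + h (x(n := -1))) / 2)"
proof -
  let ?R = "rademacher_set n"
  define hp hm where "hp x = h (x(n := 1))" and "hm x = h (x(n := -1))" for x
  define hb where "hb x = (hp x + hm x) / 2" for x
  define S where "S = (\<Sum>x\<in>?R. hb x)"
  have "(\<Sum>y\<in>rademacher_set (Suc n). h y) = 2 * S"
    unfolding sum_rademacher_set_Suc S_def hb_def hp_def hm_def by (simp add: sum_divide_distrib[symmetric])
  then have total: "(\<Sum>y\<in>rademacher_set (Suc n). h y) * ln ((\<Sum>y\<in>rademacher_set (Suc n). h y) / 2 ^ Suc n)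
      = 2 * (S * ln (S / 2 ^ n))"
    by simp
  have xlnx: "(\<Sum>y\<in>rademacher_set (Suc n). h y * ln (h y)) = (\<Sum>x\<in>?R. hp x * ln (hp x) + hm x * ln (hm x))"
    unfolding sum_rademacher_set_Suc hp_def hm_def ..
  have "two_point_entropy (hp x) (hm x) = hp x * ln (hp x) + hm x * ln (hm x) - 2 * (hb x * ln (hb x))" for x
    by (simp add: two_point_entropy_def hb_def)
  then have "(\<Sum>x\<in>?R. two_point_entropy (hp x) (hm x))
      = (\<Sum>x\<in>?R. hp x * ln (hp x) + hm x * ln (hm x)) - 2 * (\<Sum>x\<in>?R. hb x * ln (hb x))"
    by (simp add: sum_subtractf sum_distrib_left)
  then show ?thesis
    unfolding cube_entropy_def total xlnx S_def hb_def hp_def hm_def by simp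
qed

text \<open>Tensorisation: the induction step splits off the last coordinate with
  cube_entropy_Suc. The new coordinate is handled by the two-point inequality, which needs u n to
  be constant along that coordinate; the old ones by joint convexity of the divergence.\<close>

lemma cube_entropy_le_sum_bregman:
  assumes "\<And>x. h x > 0" and "\<And>i x. u i x > 0"
    and "\<And>i x s. i < n \<Longrightarrow> u i (x(i := s)) = u i x"
  shows "cube_entropy n h \<le> (\<Sum>i<n. \<Sum>x\<in>rademacher_set n. bregman_xlnx (h x) (u i x))"
  using assms
proof (induction n arbitrary: h u)
  case 0
  then show ?case by (simp add: cube_entropy_def rademacher_set_0)
next
  case (Suc n)
  define hp hm where "hp x = h (x(n := 1))" and "hm x = h (x(n := -1))" for x
  define up um where "up i x = u i (x(n := 1))" and "um i x = u i (x(n := -1))" for i x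
  define hb where "hb x = (hp x + hm x) / 2" for x
  define ub where "ub i x = (up i x + um i x) / 2" for i x
  have ub_indep: "ub i (x(i := s)) = ub i x" if "i < n" for i x s
  proof -
    have "i \<noteq> n" using that by simp
    then have "u i (x(i := s, n := t)) = u i (x(n := t))" for t
      using Suc.prems(3)[of i "x(n := t)" s] that fun_upd_twist[of i n x s t] by (metis less_SucI)
    then show ?thesis by (simp add: ub_def up_def um_def)
  qed
  have IH: "cube_entropy n hb \<le> (\<Sum>i<n. \<Sum>x\<in>rademacher_set n. bregman_xlnx (hb x) (ub i x))"
    by (rule Suc.IH[OF _ _ ub_indep])
      (use Suc.prems(1,2) in \<open>auto simp: hb_def ub_def hp_def hm_def up_def um_def add_pos_pos\<close>)
  have last: "two_point_entropy (hp x) (hm x) \<le> bregman_xlnx (hp x) (up n x) + bregman_xlnx (hm x) (um n x)"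
    for x
  proof -
    have "up n x = u n x" "um n x = u n x"
      unfolding up_def um_def by (rule Suc.prems(3), simp)+
    then show ?thesis
      using Suc.prems(1,2) by (simp add: two_point_entropy_le_bregman hp_def hm_def)
  qed
  have average: "2 * bregman_xlnx (hb x) (ub i x) \<le> bregman_xlnx (hp x) (up i x) + bregman_xlnx (hm x) (um i x)"
    for i x
    unfolding hb_def ub_def
    using Suc.prems(1,2) by (intro bregman_xlnx_midpoint_convex) (simp_all add: hp_def hm_def up_def um_def)
  have "cube_entropy (Suc n) h = (\<Sum>x\<in>rademacher_set n. two_point_entropy (hp x) (hm x)) + 2 * cube_entropy n hb"
    unfolding cube_entropy_Suc hb_def hp_def hm_def ..
  also have "\<dots> \<le> (\<Sum>x\<in>rademacher_set n. bregman_xlnx (hp x) (up n x) + bregman_xlnx (hm x) (um n x))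
      + 2 * (\<Sum>i<n. \<Sum>x\<in>rademacher_set n. bregman_xlnx (hb x) (ub i x))"
    using IH last by (intro add_mono sum_mono) simp_all
  also have "\<dots> \<le> (\<Sum>x\<in>rademacher_set n. bregman_xlnx (hp x) (up n x) + bregman_xlnx (hm x) (um n x))
      + (\<Sum>i<n. \<Sum>x\<in>rademacher_set n. bregman_xlnx (hp x) (up i x) + bregman_xlnx (hm x) (um i x))"
    unfolding sum_distrib_left by (intro add_mono sum_mono average order.refl)
  also have "\<dots> = (\<Sum>i<Suc n. \<Sum>y\<in>rademacher_set (Suc n). bregman_xlnx (h y) (u i y))"
    by (simp add: sum_rademacher_set_Suc hp_def hm_def up_def um_def)
  finally show ?case .
qed

section \<open>Concentration of functions with small one-sided gradient\<close>

definition coord_min :: "((nat \<Rightarrow> real) \<Rightarrow> real) \<Rightarrow> nat \<Rightarrow> (nat \<Rightarrow> real) \<Rightarrow> real" where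
  "coord_min f i x = min (f (x(i := 1))) (f (x(i := -1)))"

lemma coord_min_le: "x \<in> rademacher_set n \<Longrightarrow> i < n \<Longrightarrow> coord_min f i x \<le> f x"
  unfolding coord_min_def using rademacher_coord[of x n i]
  by (metis fun_upd_triv min.cobounded1 min.cobounded2)

lemma exp_minus_le_quadratic:
  fixes w :: real
  assumes "w \<ge> 0"
  shows "exp (- w) \<le> 1 - w + w\<^sup>2 / 2"
proof -
  let ?g = "\<lambda>w::real. 1 - w + w\<^sup>2 / 2 - exp (- w)"
  have "?g 0 \<le> ?g w"
  proof (rule DERIV_nonneg_imp_nondecreasing[OF assms])
    fix x :: real
    have "(?g has_real_derivative (x - 1 + exp (- x))) (at x)"
      by (auto intro!: derivative_eq_intros simp: power2_eq_square)
    moreover have "0 \<le> x - 1 + exp (- x)"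
      using exp_ge_add_one_self[of "- x"] by simp
    ultimately show "\<exists>y. (?g has_real_derivative y) (at x) \<and> 0 \<le> y" by blast
  qed
  then show ?thesis by simp
qed

lemma bregman_xlnx_exp_le:
  assumes "w \<ge> 0"
  shows "bregman_xlnx (exp a) (exp (a - w)) \<le> exp a * (w\<^sup>2 / 2)"
proof -
  have "exp (a - w) = exp a * exp (- w)"
    by (simp add: mult_exp_exp)
  moreover have "bregman_xlnx (exp a) (exp (a - w)) = exp a * a - exp a * (a - w) - exp a + exp (a - w)"
    by (simp add: bregman_xlnx_def)
  ultimately have "bregman_xlnx (exp a) (exp (a - w)) = exp a * (w - 1 + exp (- w))"
    by (simp add: algebra_simps)
  also have "\<dots> \<le> exp a * (w\<^sup>2 / 2)"
    using exp_minus_le_quadratic[OF assms] by (intro mult_left_mono) auto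
  finally show ?thesis .
qed

lemma modified_log_sobolev:
  assumes "l \<ge> 0"
    and grad: "\<And>x. x \<in> rademacher_set n \<Longrightarrow> (\<Sum>i<n. (f x - coord_min f i x)\<^sup>2) \<le> v"
  shows "cube_entropy n (\<lambda>x. exp (l * f x)) \<le> l\<^sup>2 * v / 2 * (\<Sum>x\<in>rademacher_set n. exp (l * f x))"
proof -
  let ?R = "rademacher_set n"
  have "cube_entropy n (\<lambda>x. exp (l * f x))
      \<le> (\<Sum>i<n. \<Sum>x\<in>?R. bregman_xlnx (exp (l * f x)) (exp (l * coord_min f i x)))"
    by (rule cube_entropy_le_sum_bregman) (auto simp: coord_min_def)
  also have "\<dots> = (\<Sum>x\<in>?R. \<Sum>i<n. bregman_xlnx (exp (l * f x)) (exp (l * f x - l * (f x - coord_min f i x))))"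
    by (subst sum.swap) (simp add: algebra_simps)
  also have "\<dots> \<le> (\<Sum>x\<in>?R. \<Sum>i<n. exp (l * f x) * ((l * (f x - coord_min f i x))\<^sup>2 / 2))"
    using assms(1) coord_min_le by (intro sum_mono bregman_xlnx_exp_le) simp
  also have "\<dots> = (\<Sum>x\<in>?R. exp (l * f x) * (l\<^sup>2 / 2 * (\<Sum>i<n. (f x - coord_min f i x)\<^sup>2)))"
    by (simp add: sum_distrib_left power_mult_distrib ac_simps)
  also have "\<dots> \<le> (\<Sum>x\<in>?R. exp (l * f x) * (l\<^sup>2 / 2 * v))"
    by (intro sum_mono mult_left_mono grad) auto
  also have "\<dots> = l\<^sup>2 * v / 2 * (\<Sum>x\<in>?R. exp (l * f x))"
    by (simp add: sum_distrib_left sum_distrib_right algebra_simps)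
  finally show ?thesis .
qed

text \<open>Herbst's argument: the hypothesis says that K l / l is nonincreasing on the positive reals,
  and it tends to K' 0 = 0 at 0.\<close>

lemma herbst_argument:
  fixes K K' :: "real \<Rightarrow> real"
  assumes deriv: "\<And>l. (K has_real_derivative K' l) (at l)"
    and "K 0 = 0" and "K' 0 = 0"
    and secant: "\<And>l. l > 0 \<Longrightarrow> l * K' l \<le> K l"
    and "l\<^sub>0 > 0"
  shows "K l\<^sub>0 \<le> 0"
proof -
  define Q where "Q l = K l / l" for l
  have "((\<lambda>l. (K l - K 0) / (l - 0)) \<longlongrightarrow> K' 0) (at 0)"
    using deriv[of 0] by (simp add: has_field_derivative_iff)
  then have "(Q \<longlongrightarrow> 0) (at_right 0)"
    using assms(2,3) by (simp add: Q_def[abs_def] filterlim_at_split)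
  moreover have "Q l\<^sub>0 \<le> Q \<mu>" if "0 < \<mu>" "\<mu> \<le> l\<^sub>0" for \<mu>
  proof (rule DERIV_nonpos_imp_nonincreasing[OF that(2)])
    fix l assume "\<mu> \<le> l"
    then have "l > 0" using that by simp
    then have "(Q has_real_derivative (K' l * l - K l) / l\<^sup>2) (at l)"
      unfolding Q_def[abs_def] by (auto intro!: derivative_eq_intros deriv simp: power2_eq_square)
    moreover have "(K' l * l - K l) / l\<^sup>2 \<le> 0"
      using secant[OF \<open>l > 0\<close>] by (intro divide_nonpos_nonneg) (auto simp: algebra_simps)
    ultimately show "\<exists>y. (Q has_real_derivative y) (at l) \<and> y \<le> 0" by blast
  qed
  then have "\<forall>\<^sub>F \<mu> in at_right 0. Q l\<^sub>0 \<le> Q \<mu>"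
    unfolding eventually_at_right_field using \<open>l\<^sub>0 > 0\<close> by (intro exI[of _ l\<^sub>0]) auto
  ultimately have "Q l\<^sub>0 \<le> 0"
    by (intro tendsto_lowerbound) auto
  then show ?thesis using \<open>l\<^sub>0 > 0\<close> by (simp add: Q_def divide_le_0_iff)
qed

lemma log_mgf_le:
  assumes grad: "\<And>x. x \<in> rademacher_set n \<Longrightarrow> (\<Sum>i<n. (f x - coord_min f i x)\<^sup>2) \<le> v"
    and "l\<^sub>0 > 0"
  shows "ln ((\<Sum>x\<in>rademacher_set n. exp (l\<^sub>0 * f x)) / 2 ^ n)
     \<le> l\<^sub>0 * ((\<Sum>x\<in>rademacher_set n. f x) / 2 ^ n) + v / 2 * l\<^sub>0\<^sup>2"
proof -
  let ?R = "rademacher_set n"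
  define N :: real where "N = 2 ^ n"
  define m where "m = (\<Sum>x\<in>?R. f x) / N"
  define Z Z' where "Z l = (\<Sum>x\<in>?R. exp (l * f x))" and "Z' l = (\<Sum>x\<in>?R. f x * exp (l * f x))" for l
  define K K' where "K l = ln (Z l / N) - l * m - v / 2 * l\<^sup>2"
    and "K' l = Z' l / Z l - m - v * l" for l
  have N: "N > 0" by (simp add: N_def)
  have Z: "Z l > 0" for l
    unfolding Z_def by (intro sum_pos finite_rademacher_set rademacher_set_not_empty) auto
  have "(K has_real_derivative K' l) (at l)" for l
  proof -
    have "(Z has_real_derivative Z' l) (at l)"
      unfolding Z_def[abs_def] Z'_def by (auto intro!: derivative_eq_intros simp: algebra_simps)
    then show ?thesis
      unfolding K_def[abs_def] K'_def using Z[of l] N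
      by (auto intro!: derivative_eq_intros simp: power2_eq_square field_simps)
  qed
  moreover have "K 0 = 0" "K' 0 = 0"
    using N by (simp_all add: K_def K'_def Z_def Z'_def m_def N_def card_rademacher_set)
  moreover have "l * K' l \<le> K l" if "l > 0" for l
  proof -
    have "l * Z' l - Z l * ln (Z l / N) \<le> l\<^sup>2 * v / 2 * Z l"
      using modified_log_sobolev[OF _ grad, of l] that
      by (simp add: cube_entropy_def Z_def Z'_def N_def sum_distrib_left algebra_simps)
    moreover have "l * (Z' l / Z l) - ln (Z l / N) = (l * Z' l - Z l * ln (Z l / N)) / Z l"
      using Z[of l] by (simp add: field_simps)
    ultimately have "l * (Z' l / Z l) - ln (Z l / N) \<le> l\<^sup>2 * v / 2"
      using Z[of l] by (simp add: pos_divide_le_eq)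
    moreover have "l * K' l = l * (Z' l / Z l) - l * m - l\<^sup>2 * v"
      by (simp add: K'_def algebra_simps power2_eq_square)
    moreover have "K l = ln (Z l / N) - l * m - l\<^sup>2 * v / 2"
      by (simp add: K_def)
    ultimately show ?thesis by linarith
  qed
  ultimately have "K l\<^sub>0 \<le> 0" using herbst_argument \<open>l\<^sub>0 > 0\<close> by blast
  then show ?thesis by (simp add: K_def Z_def m_def N_def)
qed

lemma upper_tail_le:
  assumes "v > 0" "t > 0"
    and grad: "\<And>x. x \<in> rademacher_set n \<Longrightarrow> (\<Sum>i<n. (f x - coord_min f i x)\<^sup>2) \<le> v"
  shows "card {x\<in>rademacher_set n. f x \<ge> (\<Sum>x\<in>rademacher_set n. f x) / 2 ^ n + t}
     \<le> 2 ^ n * exp (- t\<^sup>2 / (2 * v))"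
proof -
  let ?R = "rademacher_set n"
  define m where "m = (\<Sum>x\<in>?R. f x) / 2 ^ n"
  define l where "l = t / v"
  have l: "l > 0" using assms by (simp add: l_def)
  have "ln ((\<Sum>x\<in>?R. exp (l * f x)) / 2 ^ n) \<le> l * m + v / 2 * l\<^sup>2"
    unfolding m_def using log_mgf_le[OF grad l] by simp
  moreover have "(\<Sum>x\<in>?R. exp (l * f x)) / 2 ^ n > 0"
    by (intro divide_pos_pos sum_pos finite_rademacher_set rademacher_set_not_empty) auto
  ultimately have "(\<Sum>x\<in>?R. exp (l * f x)) / 2 ^ n \<le> exp (l * m + v / 2 * l\<^sup>2)"
    by (metis exp_le_cancel_iff exp_ln)
  then have mgf: "(\<Sum>x\<in>?R. exp (l * f x)) \<le> 2 ^ n * exp (l * m + v / 2 * l\<^sup>2)"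
    by (simp add: field_simps)
  let ?S = "{x\<in>?R. f x \<ge> m + t}"
  have "real (card ?S) = (\<Sum>x\<in>?S. 1)" by simp
  also have "\<dots> \<le> (\<Sum>x\<in>?S. exp (l * (f x - m - t)))"
    using l by (intro sum_mono) auto
  also have "\<dots> \<le> (\<Sum>x\<in>?R. exp (l * (f x - m - t)))"
    by (intro sum_mono2 finite_rademacher_set) auto
  also have "\<dots> = (\<Sum>x\<in>?R. exp (l * f x)) * exp (- l * (m + t))"
    by (simp add: sum_distrib_right mult_exp_exp algebra_simps)
  also have "\<dots> \<le> 2 ^ n * exp (l * m + v / 2 * l\<^sup>2) * exp (- l * (m + t))"
    using mgf by (intro mult_right_mono) auto
  also have "\<dots> = 2 ^ n * exp (- t\<^sup>2 / (2 * v))"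
    using assms by (simp add: mult.assoc mult_exp_exp l_def field_simps power2_eq_square)
  finally show ?thesis by (simp add: m_def)
qed

section \<open>Norms of Rademacher sums\<close>

definition rademacher_sum_norm :: "nat \<Rightarrow> nat \<Rightarrow> (nat \<Rightarrow> nat \<Rightarrow> real) \<Rightarrow> (nat \<Rightarrow> real) \<Rightarrow> real" where
  "rademacher_sum_norm n d a x = L2_set (\<lambda>l. \<Sum>i<n. x i * a i l) {..<d}"

lemma sum_mult_le_L2_set: "(\<Sum>i\<in>A. f i * g i) \<le> L2_set f A * L2_set g A"
proof -
  have "(\<Sum>i\<in>A. f i * g i) \<le> (\<Sum>i\<in>A. \<bar>f i\<bar> * \<bar>g i\<bar>)"
    by (intro sum_mono) (simp add: abs_mult[symmetric])
  also have "\<dots> \<le> L2_set f A * L2_set g A" by (rule L2_set_mult_ineq)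
  finally show ?thesis .
qed

lemma L2_set_power2: "(L2_set f A)\<^sup>2 = (\<Sum>i\<in>A. (f i)\<^sup>2)"
  by (simp add: L2_set_def sum_nonneg)

text \<open>Convexity of the norm enters here: by Cauchy-Schwarz the norm of the new sum is at least its
  component along the old one, so a drop is bounded by the first-order change. No such bound holds
  for increases, whence the one-sided gradient.\<close>

lemma rademacher_sum_norm_fun_upd_drop_le:
  assumes x: "x \<in> rademacher_set n" and i: "i < n" and s: "s \<in> {-1, 1}"
  shows "rademacher_sum_norm n d a x * (rademacher_sum_norm n d a x - rademacher_sum_norm n d a (x(i := s)))
     \<le> 2 * \<bar>\<Sum>l<d. (\<Sum>j<n. x j * a j l) * a i l\<bar>"
proof -
  define y where "y = (\<lambda>l. \<Sum>j<n. x j * a j l)"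
  define c where "c = s - x i"
  have upd: "(\<Sum>j<n. (x(i := s)) j * a j l) = y l + c * a i l" for l
  proof -
    have "(\<Sum>j<n. (x(i := s)) j * a j l) = (\<Sum>j<n. x j * a j l + (if j = i then c * a i l else 0))"
      by (intro sum.cong) (auto simp: c_def algebra_simps)
    then show ?thesis using i by (simp add: sum.distrib y_def)
  qed
  have norm_x: "rademacher_sum_norm n d a x = L2_set y {..<d}"
    by (simp add: rademacher_sum_norm_def y_def)
  have "rademacher_sum_norm n d a (x(i := s)) = L2_set (\<lambda>l. y l + c * a i l) {..<d}"
    by (simp only: rademacher_sum_norm_def upd)
  then have "(\<Sum>l<d. y l * (y l + c * a i l)) \<le> rademacher_sum_norm n d a x * rademacher_sum_norm n d a (x(i := s))"
    unfolding norm_x by (simp only: sum_mult_le_L2_set)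
  moreover have "(\<Sum>l<d. y l * (y l + c * a i l)) = (rademacher_sum_norm n d a x)\<^sup>2 + c * (\<Sum>l<d. y l * a i l)"
    unfolding norm_x L2_set_power2 by (simp add: algebra_simps sum.distrib sum_distrib_left power2_eq_square)
  moreover have "- (c * (\<Sum>l<d. y l * a i l)) \<le> 2 * \<bar>\<Sum>l<d. y l * a i l\<bar>"
  proof -
    have "- (c * (\<Sum>l<d. y l * a i l)) \<le> \<bar>c\<bar> * \<bar>\<Sum>l<d. y l * a i l\<bar>"
      unfolding abs_mult[symmetric] by (rule abs_ge_minus_self)
    also have "\<dots> \<le> 2 * \<bar>\<Sum>l<d. y l * a i l\<bar>"
      using rademacher_coord[OF x i] s by (intro mult_right_mono) (auto simp: c_def)
    finally show ?thesis .
  qed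
  ultimately have "rademacher_sum_norm n d a x * (rademacher_sum_norm n d a x - rademacher_sum_norm n d a (x(i := s)))
      \<le> 2 * \<bar>\<Sum>l<d. y l * a i l\<bar>"
    by (simp add: power2_eq_square right_diff_distrib)
  then show ?thesis by (simp add: y_def)
qed

lemma rademacher_sum_norm_coord_min_drop_le:
  assumes "x \<in> rademacher_set n" and "i < n"
  shows "rademacher_sum_norm n d a x * (rademacher_sum_norm n d a x - coord_min (rademacher_sum_norm n d a) i x)
     \<le> 2 * \<bar>\<Sum>l<d. (\<Sum>j<n. x j * a j l) * a i l\<bar>"
proof -
  obtain s where "s \<in> {-1, 1}" "coord_min (rademacher_sum_norm n d a) i x = rademacher_sum_norm n d a (x(i := s))"
    unfolding coord_min_def min_def by (metis insertCI)
  then show ?thesis using rademacher_sum_norm_fun_upd_drop_le[OF assms] by simp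
qed

lemma rademacher_sum_norm_one_sided_gradient_le:
  assumes "B \<ge> 0"
    and bound: "\<And>r. (\<Sum>i<n. (\<Sum>l<d. r l * a i l)\<^sup>2) \<le> B * (\<Sum>l<d. (r l)\<^sup>2)"
    and x: "x \<in> rademacher_set n"
  shows "(\<Sum>i<n. (rademacher_sum_norm n d a x - coord_min (rademacher_sum_norm n d a) i x)\<^sup>2) \<le> 4 * B"
proof -
  define F where "F = rademacher_sum_norm n d a"
  define y where "y = (\<lambda>l. \<Sum>j<n. x j * a j l)"
  have F_nonneg: "F z \<ge> 0" for z by (simp add: F_def rademacher_sum_norm_def)
  have cm: "0 \<le> coord_min F i x" "coord_min F i x \<le> F x" if "i < n" for i
    using F_nonneg coord_min_le[OF x that] by (auto simp: coord_min_def)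
  show ?thesis
  proof (cases "F x = 0")
    case True
    then have "coord_min F i x = 0" if "i < n" for i using cm[OF that] by simp
    then show ?thesis using True \<open>B \<ge> 0\<close> by (simp add: F_def[symmetric])
  next
    case False
    then have pos: "(F x)\<^sup>2 > 0" using F_nonneg[of x] by simp
    have "(F x)\<^sup>2 * (\<Sum>i<n. (F x - coord_min F i x)\<^sup>2) = (\<Sum>i<n. (F x * (F x - coord_min F i x))\<^sup>2)"
      by (simp add: sum_distrib_left power_mult_distrib)
    also have "\<dots> \<le> (\<Sum>i<n. (2 * \<bar>\<Sum>l<d. y l * a i l\<bar>)\<^sup>2)"
      using F_nonneg[of x] cm rademacher_sum_norm_coord_min_drop_le[OF x]
      by (intro sum_mono power_mono) (auto simp: F_def y_def)
    also have "\<dots> = 4 * (\<Sum>i<n. (\<Sum>l<d. y l * a i l)\<^sup>2)"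
      by (simp add: sum_distrib_left power_mult_distrib)
    also have "\<dots> \<le> 4 * (B * (F x)\<^sup>2)"
      using bound[of y] by (simp add: F_def rademacher_sum_norm_def L2_set_power2 y_def)
    finally show ?thesis
      using pos by (simp add: F_def[symmetric] mult.commute[of B] mult_le_cancel_left_pos)
  qed
qed

lemma rademacher_sum_norm_mean_le:
  "(\<Sum>x\<in>rademacher_set n. rademacher_sum_norm n d a x) / 2 ^ n \<le> sqrt (\<Sum>l<d. \<Sum>i<n. (a i l)\<^sup>2)"
proof -
  let ?R = "rademacher_set n"
  define N :: real where "N = 2 ^ n"
  have N: "N > 0" by (simp add: N_def)
  have "(\<Sum>x\<in>?R. (rademacher_sum_norm n d a x)\<^sup>2) = (\<Sum>x\<in>?R. \<Sum>l<d. (\<Sum>i<n. x i * a i l)\<^sup>2)"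
    by (simp only: rademacher_sum_norm_def L2_set_power2)
  also have "\<dots> = (\<Sum>x\<in>?R. \<Sum>l<d. \<Sum>i<n. \<Sum>j<n. (x i * x j) * (a i l * a j l))"
    by (simp add: power2_eq_square sum_product algebra_simps)
  also have "\<dots> = (\<Sum>l<d. \<Sum>i<n. \<Sum>j<n. (\<Sum>x\<in>?R. x i * x j) * (a i l * a j l))"
    by (simp add: sum.swap[of _ ?R] sum_distrib_right)
  also have "\<dots> = (\<Sum>l<d. \<Sum>i<n. \<Sum>j<n. if i = j then N * (a i l * a j l) else 0)"
    by (intro sum.cong refl) (simp add: sum_rademacher_set_mult_coords N_def)
  also have "\<dots> = N * (\<Sum>l<d. \<Sum>i<n. (a i l)\<^sup>2)"
    by (simp add: sum_distrib_left power2_eq_square)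
  finally have sq: "(\<Sum>x\<in>?R. (rademacher_sum_norm n d a x)\<^sup>2) = N * (\<Sum>l<d. \<Sum>i<n. (a i l)\<^sup>2)" .
  have "(\<Sum>x\<in>?R. rademacher_sum_norm n d a x * 1)
      \<le> L2_set (rademacher_sum_norm n d a) ?R * L2_set (\<lambda>_. 1) ?R"
    by (rule sum_mult_le_L2_set)
  also have "\<dots> = N * sqrt (\<Sum>l<d. \<Sum>i<n. (a i l)\<^sup>2)"
    using N by (simp add: L2_set_def sq card_rademacher_set real_sqrt_mult N_def[symmetric])
  finally show ?thesis using N by (simp add: N_def field_simps)
qed

lemma rademacher_sum_norm_tail_le:
  assumes "B > 0" "t > 0"
    and bound: "\<And>r. (\<Sum>i<n. (\<Sum>l<d. r l * a i l)\<^sup>2) \<le> B * (\<Sum>l<d. (r l)\<^sup>2)"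
  shows "card {x\<in>rademacher_set n. rademacher_sum_norm n d a x \<ge> sqrt (\<Sum>l<d. \<Sum>i<n. (a i l)\<^sup>2) + t}
     \<le> 2 ^ n * exp (- t\<^sup>2 / (8 * B))"
proof -
  let ?R = "rademacher_set n" and ?F = "rademacher_sum_norm n d a"
  have "card {x\<in>?R. ?F x \<ge> sqrt (\<Sum>l<d. \<Sum>i<n. (a i l)\<^sup>2) + t}
      \<le> card {x\<in>?R. ?F x \<ge> (\<Sum>x\<in>?R. ?F x) / 2 ^ n + t}"
    using rademacher_sum_norm_mean_le[of n d a]
    by (intro card_mono) (auto simp: finite_rademacher_set)
  also have "real \<dots> \<le> 2 ^ n * exp (- t\<^sup>2 / (2 * (4 * B)))"
    using assms rademacher_sum_norm_one_sided_gradient_le[OF _ bound]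
    by (intro upper_tail_le) auto
  finally show ?thesis by simp
qed

section \<open>Matrices\<close>

lemma sum_mult_orthonormal_cols:
  assumes "U \<in> carrier_mat n d" "transpose_mat U * U = 1\<^sub>m d" "l < d" "m < d"
  shows "(\<Sum>i<n. U $$ (i, l) * U $$ (i, m)) = (if l = m then 1 else 0)"
proof -
  have "(\<Sum>i<n. U $$ (i, l) * U $$ (i, m)) = (transpose_mat U * U) $$ (l, m)"
    using assms(1,3,4) by (simp add: scalar_prod_def atLeast0LessThan)
  also have "\<dots> = (if l = m then 1 else 0)"
    unfolding assms(2) using assms(3,4) by simp
  finally show ?thesis .
qed

lemma sum_sq_orthonormal_cols_mult:
  fixes U :: "real Matrix.mat"
  assumes U: "U \<in> carrier_mat n d" "transpose_mat U * U = 1\<^sub>m d"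
  shows "(\<Sum>i<n. (\<Sum>l<d. U $$ (i, l) * w l)\<^sup>2) = (\<Sum>l<d. (w l)\<^sup>2)"
proof -
  have "(\<Sum>i<n. (\<Sum>l<d. U $$ (i, l) * w l)\<^sup>2)
      = (\<Sum>i<n. \<Sum>l<d. \<Sum>m<d. (U $$ (i, l) * U $$ (i, m)) * (w l * w m))"
    by (simp add: power2_eq_square sum_product algebra_simps)
  also have "\<dots> = (\<Sum>l<d. \<Sum>m<d. (\<Sum>i<n. U $$ (i, l) * U $$ (i, m)) * (w l * w m))"
    by (simp add: sum.swap[of _ "{..<n}"] sum_distrib_right)
  also have "\<dots> = (\<Sum>l<d. \<Sum>m<d. if l = m then w l * w m else 0)"
    by (intro sum.cong refl) (simp add: sum_mult_orthonormal_cols[OF U])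
  also have "\<dots> = (\<Sum>l<d. (w l)\<^sup>2)"
    by (simp add: power2_eq_square)
  finally show ?thesis .
qed

lemma sum_sq_scaled_orthonormal_cols_le:
  fixes U :: "real Matrix.mat"
  assumes w: "\<And>i. i < n \<Longrightarrow> (w i)\<^sup>2 = c"
    and U: "U \<in> carrier_mat n d" "transpose_mat U * U = 1\<^sub>m d"
    and e: "\<And>l. l < d \<Longrightarrow> \<bar>e l\<bar> \<le> 1" and "c \<ge> 0"
  shows "(\<Sum>i<n. (\<Sum>l<d. r l * (w i * U $$ (i, l) * e l))\<^sup>2) \<le> c * (\<Sum>l<d. (r l)\<^sup>2)"
proof -
  have "(\<Sum>l<d. r l * (w i * U $$ (i, l) * e l)) = w i * (\<Sum>l<d. U $$ (i, l) * (r l * e l))" for i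
    by (simp add: sum_distrib_left ac_simps)
  then have "(\<Sum>i<n. (\<Sum>l<d. r l * (w i * U $$ (i, l) * e l))\<^sup>2)
      = (\<Sum>i<n. (w i)\<^sup>2 * (\<Sum>l<d. U $$ (i, l) * (r l * e l))\<^sup>2)"
    by (simp add: power_mult_distrib)
  also have "\<dots> = c * (\<Sum>l<d. (r l * e l)\<^sup>2)"
    by (simp add: w sum_sq_orthonormal_cols_mult[OF U] flip: sum_distrib_left)
  also have "\<dots> \<le> c * (\<Sum>l<d. (r l)\<^sup>2)"
  proof (intro mult_left_mono sum_mono)
    fix l assume "l \<in> {..<d}"
    then have "(e l)\<^sup>2 \<le> 1" using e by (simp add: abs_square_le_1)
    then show "(r l * e l)\<^sup>2 \<le> (r l)\<^sup>2" by (simp add: power_mult_distrib mult_left_le)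
  qed fact
  finally show ?thesis .
qed

lemma sum_sq_scaled_orthonormal_cols:
  fixes U :: "real Matrix.mat"
  assumes w: "\<And>i. i < n \<Longrightarrow> (w i)\<^sup>2 = c"
    and U: "U \<in> carrier_mat n d" "transpose_mat U * U = 1\<^sub>m d"
  shows "(\<Sum>l<d. \<Sum>i<n. (w i * U $$ (i, l) * e l)\<^sup>2) = c * (\<Sum>l<d. (e l)\<^sup>2)"
proof -
  have "(\<Sum>i<n. (w i * U $$ (i, l) * e l)\<^sup>2) = c * (e l)\<^sup>2" if "l < d" for l
  proof -
    have "(\<Sum>i<n. (w i * U $$ (i, l) * e l)\<^sup>2) = (\<Sum>i<n. c * (e l)\<^sup>2 * (U $$ (i, l) * U $$ (i, l)))"
      by (intro sum.cong refl) (simp add: power_mult_distrib w power2_eq_square[of "U $$ _"])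
    then show ?thesis
      using sum_mult_orthonormal_cols[OF U that that] by (simp flip: sum_distrib_left)
  qed
  then show ?thesis by (simp add: sum_distrib_left)
qed

lemma walsh_hadamard_carrier: "walsh_hadamard k \<in> carrier_mat (2 ^ k) (2 ^ k)"
  unfolding walsh_hadamard_def by simp

lemma walsh_hadamard_entry_sq:
  "i < 2 ^ k \<Longrightarrow> j < 2 ^ k \<Longrightarrow> (walsh_hadamard k $$ (i, j))\<^sup>2 = 1 / 2 ^ k"
  unfolding walsh_hadamard_def by (simp add: power_divide power_mult[symmetric])

lemma vnorm_eq_L2_set: "vnorm v = L2_set (\<lambda>m. v $ m) {..<dim_vec v}"
  by (simp add: vnorm_def L2_set_def scalar_prod_def atLeast0LessThan power2_eq_square)

lemma sum_mult_diagonal_col: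
  fixes E :: "real Matrix.mat"
  assumes "E \<in> carrier_mat d d" "diagonal_mat E" "l < d"
  shows "(\<Sum>m<d. f m * E $$ (m, l)) = f l * E $$ (l, l)"
proof -
  have "(\<Sum>m<d. f m * E $$ (m, l)) = (\<Sum>m<d. if m = l then f l * E $$ (l, l) else 0)"
    using assms unfolding diagonal_mat_def by (intro sum.cong) auto
  then show ?thesis using assms(3) by simp
qed

lemma index_mult_mat_diag_mult_diagonal:
  fixes W U E :: "real Matrix.mat"
  assumes W: "W \<in> carrier_mat n n" and U: "U \<in> carrier_mat n d"
    and E: "E \<in> carrier_mat d d" "diagonal_mat E" and j: "j < n" and l: "l < d"
  shows "(W * mat_diag n x * U * E) $$ (j, l) = (\<Sum>i<n. x i * (W $$ (j, i) * U $$ (i, l) * E $$ (l, l)))"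
proof -
  define A where "A = W * mat_diag n x"
  have A: "A = Matrix.mat n n (\<lambda>(i, j). W $$ (i, j) * x j)"
    unfolding A_def by (rule mat_diag_mult_right[OF W])
  have AU: "A * U \<in> carrier_mat n d" unfolding A_def using W U by (intro mult_carrier_mat) auto
  have dims: "dim_row (A * U) = n" "dim_col (A * U) = d" "dim_row E = d" "dim_col E = d"
    using AU E by auto
  have "(A * U * E) $$ (j, l) = Matrix.row (A * U) j \<bullet> col E l"
    using dims j l by (intro index_mult_mat(1)) auto
  also have "\<dots> = (\<Sum>m<d. (A * U) $$ (j, m) * E $$ (m, l))"
    using dims j l by (simp add: scalar_prod_def atLeast0LessThan del: index_mult_mat)
  also have "\<dots> = (A * U) $$ (j, l) * E $$ (l, l)"
    by (rule sum_mult_diagonal_col[OF E l])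
  also have "\<dots> = (\<Sum>i<n. x i * (W $$ (j, i) * U $$ (i, l) * E $$ (l, l)))"
    using U j l by (simp add: A scalar_prod_def atLeast0LessThan sum_distrib_left sum_distrib_right ac_simps)
  finally show ?thesis unfolding A_def .
qed

lemma vnorm_row_mult_mat_diag_mult_diagonal:
  fixes W U E :: "real Matrix.mat"
  assumes W: "W \<in> carrier_mat n n" and U: "U \<in> carrier_mat n d"
    and E: "E \<in> carrier_mat d d" "diagonal_mat E" and j: "j < n"
    and e: "\<And>l. l < d \<Longrightarrow> E $$ (l, l) = e l"
  shows "vnorm (Matrix.row (W * mat_diag n x * U * E) j)
     = rademacher_sum_norm n d (\<lambda>i l. W $$ (j, i) * U $$ (i, l) * e l) x"
proof -
  define M where "M = W * mat_diag n x * U * E"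
  have "M \<in> carrier_mat n d"
    unfolding M_def using W U E by (intro mult_carrier_mat) auto
  then have "dim_row M = n" "dim_col M = d" by auto
  then show ?thesis
    unfolding vnorm_eq_L2_set rademacher_sum_norm_def M_def[symmetric]
    using index_mult_mat_diag_mult_diagonal[OF W U E j] j e by (intro L2_set_cong) (auto simp: M_def)
qed

lemma frob_norm_diagonal_sq:
  assumes "D \<in> carrier_mat d d" "diagonal_mat D"
  shows "(frob_norm D)\<^sup>2 = (\<Sum>l<d. (D $$ (l, l))\<^sup>2)"
proof -
  have "(\<Sum>i<d. \<Sum>j<d. (D $$ (i, j))\<^sup>2) = (\<Sum>i<d. \<Sum>j<d. if j = i then (D $$ (i, i))\<^sup>2 else 0)"
    using assms unfolding diagonal_mat_def by (intro sum.cong refl) auto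
  then show ?thesis using assms by (simp add: frob_norm_def sum_nonneg)
qed

lemma vnorm_diagonal_mult_vec:
  assumes "D \<in> carrier_mat d d" "diagonal_mat D" "v \<in> carrier_vec d"
  shows "vnorm (D *\<^sub>v v) = L2_set (\<lambda>m. D $$ (m, m) * v $ m) {..<d}"
proof -
  have entry: "(D *\<^sub>v v) $ m = D $$ (m, m) * v $ m" if "m < d" for m
    using assms that sum_mult_diagonal_col[of "transpose_mat D" d m "\<lambda>q. v $ q"]
    by (simp add: scalar_prod_def atLeast0LessThan diagonal_mat_def mult.commute)
  have "vnorm (D *\<^sub>v v) = L2_set (\<lambda>m. (D *\<^sub>v v) $ m) {..<d}"
    using assms by (simp add: vnorm_eq_L2_set)
  also have "\<dots> = L2_set (\<lambda>m. D $$ (m, m) * v $ m) {..<d}"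
    by (rule L2_set_cong) (simp_all add: entry)
  finally show ?thesis .
qed

lemma abs_diagonal_entry_le_op_norm:
  assumes D: "D \<in> carrier_mat d d" "diagonal_mat D" and l: "l < d"
  shows "\<bar>D $$ (l, l)\<bar> \<le> op_norm D"
proof -
  define S where "S = {vnorm (D *\<^sub>v v) | v. v \<in> carrier_vec (dim_col D) \<and> vnorm v \<le> 1}"
  have "vnorm (D *\<^sub>v unit_vec d l) = L2_set (\<lambda>m. if m = l then D $$ (l, l) else 0) {..<d}"
    unfolding vnorm_diagonal_mult_vec[OF D unit_vec_carrier] using l by (intro L2_set_cong) auto
  also have "\<dots> = sqrt (\<Sum>m<d. if m = l then (D $$ (l, l))\<^sup>2 else 0)"
    unfolding L2_set_def by (intro arg_cong[where f = sqrt] sum.cong) auto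
  also have "\<dots> = \<bar>D $$ (l, l)\<bar>"
    using l by simp
  finally have "\<bar>D $$ (l, l)\<bar> \<in> S"
    unfolding S_def using D l by (intro CollectI exI[of _ "unit_vec d l"]) (auto simp: vnorm_def)
  moreover have "bdd_above S"
  proof (rule bdd_aboveI)
    fix y assume "y \<in> S"
    then obtain v where y: "y = vnorm (D *\<^sub>v v)" and v: "v \<in> carrier_vec d" "vnorm v \<le> 1"
      using D unfolding S_def by auto
    have "(v $ m)\<^sup>2 \<le> 1" if "m < d" for m
    proof -
      have "(v $ m)\<^sup>2 \<le> (\<Sum>q<d. (v $ q)\<^sup>2)" using that by (intro member_le_sum) auto
      also have "\<dots> \<le> 1" using v by (simp add: vnorm_eq_L2_set L2_set_def)
      finally show ?thesis .
    qed
    then have "(\<Sum>m<d. (D $$ (m, m) * v $ m)\<^sup>2) \<le> (\<Sum>m<d. (D $$ (m, m))\<^sup>2)"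
      by (intro sum_mono) (simp add: power_mult_distrib mult_left_le)
    then show "y \<le> L2_set (\<lambda>m. D $$ (m, m)) {..<d}"
      unfolding y vnorm_diagonal_mult_vec[OF D v(1)] L2_set_def by simp
  qed
  ultimately show ?thesis unfolding op_norm_def S_def[symmetric] by (rule cSup_upper)
qed

lemma prob_rademacher_Max_ge_le:
  fixes N :: nat
  assumes "N > 0"
  shows "measure_pmf.prob (pmf_of_set (rademacher_set n)) {x. c \<le> Max ((\<lambda>j. g j x) ` {0..<N})}
     \<le> (\<Sum>j<N. real (card {x\<in>rademacher_set n. c \<le> g j x})) / 2 ^ n"
proof -
  let ?R = "rademacher_set n"
  have "?R \<inter> {x. c \<le> Max ((\<lambda>j. g j x) ` {0..<N})} \<subseteq> (\<Union>j<N. {x\<in>?R. c \<le> g j x})"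
  proof
    fix x assume x: "x \<in> ?R \<inter> {x. c \<le> Max ((\<lambda>j. g j x) ` {0..<N})}"
    then have "c \<le> Max ((\<lambda>j. g j x) ` {0..<N})" by simp
    moreover have "finite ((\<lambda>j. g j x) ` {0..<N})" "(\<lambda>j. g j x) ` {0..<N} \<noteq> {}"
      using assms by simp_all
    ultimately have "\<exists>a\<in>(\<lambda>j. g j x) ` {0..<N}. c \<le> a"
      using Max_ge_iff by blast
    then obtain j where "j < N" "c \<le> g j x"
      by auto
    with x show "x \<in> (\<Union>j<N. {x\<in>?R. c \<le> g j x})" by auto
  qed
  then have "card (?R \<inter> {x. c \<le> Max ((\<lambda>j. g j x) ` {0..<N})}) \<le> card (\<Union>j<N. {x\<in>?R. c \<le> g j x})"
    by (intro card_mono[OF finite_subset[OF _ finite_rademacher_set]]) auto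
  also have "\<dots> \<le> (\<Sum>j<N. card {x\<in>?R. c \<le> g j x})"
    by (rule card_UN_le) simp
  finally have "real (card (?R \<inter> {x. c \<le> Max ((\<lambda>j. g j x) ` {0..<N})}))
      \<le> (\<Sum>j<N. real (card {x\<in>?R. c \<le> g j x}))"
    unfolding of_nat_sum[symmetric] of_nat_le_iff .
  then show ?thesis
    by (simp add: measure_pmf_of_set[OF rademacher_set_not_empty finite_rademacher_set]
        card_rademacher_set divide_right_mono)
qed

lemma hadamard_row_tail_le:
  fixes U D :: "real Matrix.mat"
  assumes n: "n = 2 ^ k"
    and U: "U \<in> carrier_mat n d" "transpose_mat U * U = 1\<^sub>m d"
    and D: "D \<in> carrier_mat d d" "diagonal_mat D" and j: "j < n" and "t > 0"
  shows "card {x\<in>rademacher_set n. sqrt ((frob_norm D)\<^sup>2 / (op_norm D)\<^sup>2 / real n) + t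
       \<le> vnorm (Matrix.row (walsh_hadamard k * mat_diag n x * U * ((1 / op_norm D) \<cdot>\<^sub>m D)) j)}
     \<le> 2 ^ n * exp (- t\<^sup>2 / (8 * (1 / real n)))"
proof -
  define W where "W = walsh_hadamard k"
  define e where "e l = D $$ (l, l) / op_norm D" for l
  have W: "W \<in> carrier_mat n n" "\<And>i. i < n \<Longrightarrow> (W $$ (j, i))\<^sup>2 = 1 / real n"
    using j unfolding W_def n by (simp_all add: walsh_hadamard_carrier walsh_hadamard_entry_sq)
  have e: "\<And>l. l < d \<Longrightarrow> \<bar>e l\<bar> \<le> 1"
  proof -
    fix l assume "l < d"
    then have "\<bar>D $$ (l, l)\<bar> \<le> op_norm D" by (rule abs_diagonal_entry_le_op_norm[OF D])
    then show "\<bar>e l\<bar> \<le> 1" by (cases "op_norm D = 0") (auto simp: e_def abs_divide)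
  qed
  have "(frob_norm D)\<^sup>2 / (op_norm D)\<^sup>2 / real n = 1 / real n * (\<Sum>l<d. (e l)\<^sup>2)"
    by (simp add: frob_norm_diagonal_sq[OF D] e_def power_divide sum_divide_distrib)
  also have "\<dots> = (\<Sum>l<d. \<Sum>i<n. (W $$ (j, i) * U $$ (i, l) * e l)\<^sup>2)"
    by (rule sum_sq_scaled_orthonormal_cols[OF W(2) U, symmetric])
  finally have mean: "sqrt ((frob_norm D)\<^sup>2 / (op_norm D)\<^sup>2 / real n)
      = sqrt (\<Sum>l<d. \<Sum>i<n. (W $$ (j, i) * U $$ (i, l) * e l)\<^sup>2)"
    by simp
  have row: "vnorm (Matrix.row (W * mat_diag n x * U * ((1 / op_norm D) \<cdot>\<^sub>m D)) j)
      = rademacher_sum_norm n d (\<lambda>i l. W $$ (j, i) * U $$ (i, l) * e l) x" for x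
    using D by (intro vnorm_row_mult_mat_diag_mult_diagonal[OF W(1) U(1) _ _ j])
      (auto simp: diagonal_mat_def e_def)
  have bound: "(\<Sum>i<n. (\<Sum>l<d. r l * (W $$ (j, i) * U $$ (i, l) * e l))\<^sup>2) \<le> 1 / real n * (\<Sum>l<d. (r l)\<^sup>2)"
    for r
    by (rule sum_sq_scaled_orthonormal_cols_le[OF W(2) U e]) auto
  have "card {x\<in>rademacher_set n. sqrt (\<Sum>l<d. \<Sum>i<n. (W $$ (j, i) * U $$ (i, l) * e l)\<^sup>2) + t
      \<le> rademacher_sum_norm n d (\<lambda>i l. W $$ (j, i) * U $$ (i, l) * e l) x}
      \<le> 2 ^ n * exp (- t\<^sup>2 / (8 * (1 / real n)))"
    by (rule rademacher_sum_norm_tail_le[OF _ \<open>t > 0\<close> bound]) (simp add: n)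
  then show ?thesis
    unfolding W_def[symmetric] mean row .
qed

theorem lemma7p1:
  fixes k n d :: nat and A \<Lambda> U D V :: "real Matrix.mat" and \<nu> \<delta> :: real
  assumes n_def: "n = 2 ^ k"
    and "d \<le> n"
    and A: "A \<in> carrier_mat n d" and "A \<noteq> 0\<^sub>m n d"
    and Lam: "\<Lambda> \<in> carrier_mat d d" and "diagonal_mat \<Lambda>" and "psd_mat d (\<Lambda> - 1\<^sub>m d)"
    and "\<nu> > 0"
    and U: "U \<in> carrier_mat n d" and "transpose_mat U * U = 1\<^sub>m d"
    and D: "D \<in> carrier_mat d d" and "diagonal_mat D" and "\<forall>i<d. D $$ (i,i) \<ge> 0"
    and V: "V \<in> carrier_mat d d" and "transpose_mat V * V = 1\<^sub>m d"
    and svd: "A * inv_sqrt_mat d (transpose_mat A * A + (\<nu>^2) \<cdot>\<^sub>m \<Lambda>) = U * D * transpose_mat V"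
    and "0 < \<delta>" and "\<delta> < 1"
  shows "measure_pmf.prob (pmf_of_set (rademacher_set n))
     {\<epsilon>. Max ((\<lambda>j. vnorm (Matrix.row (walsh_hadamard k * mat_diag n \<epsilon> * U
                     * ((1 / op_norm D) \<cdot>\<^sub>m D)) j)) ` {0..<n})
          \<ge> sqrt ((frob_norm D)^2 / (op_norm D)^2 / real n)
            + sqrt (8 * ln (real n / \<delta>) / real n)} \<le> \<delta>"
proof -
  \<comment> \<open>Only the orthonormal columns of U and the diagonal D enter; the SVD of A merely produces
    them. The sign of the entries of D is irrelevant since the bound uses the absolute values.\<close>
  define t where "t = sqrt (8 * ln (real n / \<delta>) / real n)"
  have n: "n > 0" using n_def by simp
  have "ln (real n / \<delta>) > 0" using n \<open>0 < \<delta>\<close> \<open>\<delta> < 1\<close> by (simp add: less_divide_eq_1)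
  then have "t > 0" and "exp (- t\<^sup>2 / (8 * (1 / real n))) = \<delta> / n"
    using n \<open>0 < \<delta>\<close> by (simp_all add: t_def exp_minus)
  have "measure_pmf.prob (pmf_of_set (rademacher_set n))
      {\<epsilon>. Max ((\<lambda>j. vnorm (Matrix.row (walsh_hadamard k * mat_diag n \<epsilon> * U
                     * ((1 / op_norm D) \<cdot>\<^sub>m D)) j)) ` {0..<n})
        \<ge> sqrt ((frob_norm D)\<^sup>2 / (op_norm D)\<^sup>2 / real n) + t}
      \<le> (\<Sum>j<n. real (card {x\<in>rademacher_set n. sqrt ((frob_norm D)\<^sup>2 / (op_norm D)\<^sup>2 / real n) + t
          \<le> vnorm (Matrix.row (walsh_hadamard k * mat_diag n x * U * ((1 / op_norm D) \<cdot>\<^sub>m D)) j)})) / 2 ^ n"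
    by (rule prob_rademacher_Max_ge_le[OF n])
  also have "\<dots> \<le> (\<Sum>j<n. 2 ^ n * (\<delta> / n)) / 2 ^ n"
    using hadamard_row_tail_le[OF n_def U \<open>transpose_mat U * U = 1\<^sub>m d\<close> D \<open>diagonal_mat D\<close> _ \<open>t > 0\<close>]
      \<open>exp (- t\<^sup>2 / (8 * (1 / real n))) = \<delta> / n\<close>
    by (intro divide_right_mono sum_mono) simp_all
  finally show ?thesis using n by (simp add: t_def)
qed

end
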